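(* Let $d\ge 1$, let $W\in\mathbb{R}^{d\times d}$ be a weight matrix, let $x\in\mathbb{R}^d$ be an input, and let $M\in\{0,1\}^{d\times d}$ be the (unknown) binary mask actually used, so that the observed intermediate output is $y=(W\odot M)x$. Suppose an attacker draws a guessed mask $\hat M\in\{0,1\}^{d\times d}$ from a probability distribution $P$ on $\{0,1\}^{d\times d}$ such that $W\odot \hat M$ is invertible for every $\hat M$ with $P(\hat M)>0$, and reconstructs the input as $\hat x=(W\odot\hat M)^{-1}y$. Then $$\mathbb{E}_{\hat M\sim P}\,\|x-\hat x\|\;\ge\;\sum_{\hat M}P(\hat M)\,\frac{\sigma_{\min}\bigl(W\odot(\hat M-M)\bigr)}{\sigma_{\max}\bigl(W\odot \hat M\bigr)}\,\|x\|,$$ where the sum ranges over the support of $P$.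
   Context: $\odot$ denotes the entrywise (Hadamard) product of matrices; $\|\cdot\|$ is the Euclidean norm on $\mathbb{R}^d$; $\sigma_{\min}(A)$ and $\sigma_{\max}(A)$ denote the smallest and largest singular values of a square matrix $A$. The setting models a client-side layer in split learning whose weights are masked by a randomly sampled binary mask; the attacker knows $W$ and $y$ but not $M$. *)

theory Defs
  imports "HOL-Analysis.Analysis" "HOL-Probability.Probability"
begin

definition hadamard :: "real^'n^'n \<Rightarrow> real^'n^'n \<Rightarrow> real^'n^'n" (infixl "\<odot>" 70) where
  "A \<odot> B = (\<chi> i j. A $ i $ j * B $ i $ j)"

definition binary_mask :: "real^'n^'n \<Rightarrow> bool" where
  "binary_mask M \<longleftrightarrow> (\<forall>i j. M $ i $ j = 0 \<or> M $ i $ j = 1)"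

definition real_eigenvalues :: "real^'n^'n \<Rightarrow> real set" where
  "real_eigenvalues A = {c. \<exists>v. v \<noteq> 0 \<and> A *v v = c *\<^sub>R v}"

definition singular_values :: "real^'n^'n \<Rightarrow> real set" where
  "singular_values A = sqrt ` real_eigenvalues (transpose A ** A)"

definition sigma_min :: "real^'n^'n \<Rightarrow> real" where
  "sigma_min A = Min (singular_values A)"

definition sigma_max :: "real^'n^'n \<Rightarrow> real" where
  "sigma_max A = Max (singular_values A)"

end

theory Submission
  imports Defs
begin

text \<open>
  Write A = W \<odot> Mh for a guessed mask Mh and B = W \<odot> (Mh - M). Since y = (W \<odot> M) x, the
  reconstruction error is e = x - A^-1 y = A^-1 (B x), hence
  sigma_min B * |x| \<le> |B x| = |A e| \<le> sigma_max A * |e|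
  for every Mh in the support of P, and averaging over P gives the bound. Neither mask needs to
  be binary. The two singular value inequalities come from the extreme eigenvalues of the
  symmetric matrix A^T A, whose existence needs no spectral theorem: a maximiser of the
  quadratic form on the unit sphere is already an eigenvector.
\<close>

lemma nonneg_quadratic_imp_linear_coeff_zero:
  fixes a b :: real
  assumes "\<And>t. 0 \<le> a * t^2 + b * t"
  shows "b = 0"
proof -
  define s where "s = \<bar>a\<bar> + 1"
  have "s > 0" "a - s \<le> -1" unfolding s_def by auto
  have "0 \<le> a * (- b / s)^2 + b * (- b / s)" by (rule assms)
  also have "\<dots> = b^2 * (a - s) / s^2"
    using \<open>s > 0\<close> by (simp add: field_simps power2_eq_square)
  also have "\<dots> \<le> b^2 * (-1) / s^2"
    using \<open>a - s \<le> -1\<close> by (intro divide_right_mono mult_left_mono) auto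
  finally show "b = 0" using \<open>s > 0\<close> by (simp add: divide_le_0_iff)
qed

lemma symmetric_matrix_inner_swap:
  fixes S :: "real^'n^'n"
  assumes "transpose S = S"
  shows "u \<bullet> (S *v v) = v \<bullet> (S *v u)"
  by (metis assms dot_lmul_matrix inner_commute transpose_matrix_vector)

lemma symmetric_psd_quadratic_form_zero_imp_kernel:
  fixes T :: "real^'n^'n"
  assumes sym: "transpose T = T"
    and psd: "\<And>v. 0 \<le> v \<bullet> (T *v v)"
    and zero: "u \<bullet> (T *v u) = 0"
  shows "T *v u = 0"
proof -
  define w where "w = T *v u"
  have "0 \<le> (w \<bullet> (T *v w)) * t^2 + (2 * (w \<bullet> w)) * t" for t
  proof -
    have "(u + t *\<^sub>R w) \<bullet> (T *v (u + t *\<^sub>R w))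
        = u \<bullet> (T *v u) + t * (u \<bullet> (T *v w)) + t * (w \<bullet> (T *v u)) + t^2 * (w \<bullet> (T *v w))"
      by (simp add: matrix_vector_right_distrib matrix_vector_mult_scaleR inner_add_left
          inner_add_right algebra_simps power2_eq_square)
    also have "\<dots> = (w \<bullet> (T *v w)) * t^2 + (2 * (w \<bullet> w)) * t"
      using zero symmetric_matrix_inner_swap[OF sym, of u w] unfolding w_def by simp
    finally show ?thesis using psd by metis
  qed
  then have "2 * (w \<bullet> w) = 0" by (rule nonneg_quadratic_imp_linear_coeff_zero)
  then show ?thesis unfolding w_def by simp
qed

lemma quadratic_form_max_on_unit_sphere:
  fixes S :: "real^'n^'n"
  obtains u where "norm u = 1" and "\<And>v. v \<bullet> (S *v v) \<le> (u \<bullet> (S *v u)) * (v \<bullet> v)"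
proof -
  have cont: "continuous_on (sphere 0 1) (\<lambda>v::real^'n. v \<bullet> (S *v v))"
    by (intro continuous_intros linear_continuous_on matrix_vector_mul_linear)
  have "axis undefined 1 \<in> sphere (0::real^'n) 1" by simp
  then obtain u where u: "u \<in> sphere 0 1"
    and max: "\<And>v. v \<in> sphere 0 1 \<Longrightarrow> v \<bullet> (S *v v) \<le> u \<bullet> (S *v u)"
    using continuous_attains_sup[OF compact_sphere _ cont] by blast
  have "v \<bullet> (S *v v) \<le> (u \<bullet> (S *v u)) * (v \<bullet> v)" for v
  proof (cases "v = 0")
    case False
    define v' where "v' = (1 / norm v) *\<^sub>R v"
    have "v' \<bullet> (S *v v') = (v \<bullet> (S *v v)) / (v \<bullet> v)"
      unfolding v'_def by (simp add: matrix_vector_mult_scaleR dot_square_norm power2_eq_square)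
    moreover have "v' \<in> sphere 0 1" unfolding v'_def using False by simp
    ultimately show ?thesis using max[of v'] False by (simp add: divide_le_eq)
  qed simp
  with u show ?thesis by (intro that) auto
qed

lemma symmetric_matrix_max_eigenvector:
  fixes S :: "real^'n^'n"
  assumes sym: "transpose S = S"
  obtains u c where "u \<noteq> 0" "S *v u = c *\<^sub>R u" "\<And>v. v \<bullet> (S *v v) \<le> c * (v \<bullet> v)"
proof -
  obtain u where u: "norm u = 1" and max: "\<And>v. v \<bullet> (S *v v) \<le> (u \<bullet> (S *v u)) * (v \<bullet> v)"
    using quadratic_form_max_on_unit_sphere by blast
  define c where "c = u \<bullet> (S *v u)"
  define T where "T = c *\<^sub>R mat 1 - S"
  have T: "T *v v = c *\<^sub>R v - S *v v" for v
    unfolding T_def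
    by (metis matrix_vector_mult_diff_rdistrib matrix_vector_mul_lid scaleR_matrix_vector_assoc)
  have "T *v u = 0"
  proof (rule symmetric_psd_quadratic_form_zero_imp_kernel)
    show "transpose T = T" unfolding T_def using sym by (simp add: transpose_def vec_eq_iff mat_def)
    show "0 \<le> v \<bullet> (T *v v)" for v using max[of v] by (simp add: T inner_diff_right c_def)
    show "u \<bullet> (T *v u) = 0" using u by (simp add: T inner_diff_right c_def norm_eq_1)
  qed
  then have "S *v u = c *\<^sub>R u" by (simp add: T)
  moreover have "u \<noteq> 0" using u by auto
  ultimately show ?thesis using max that unfolding c_def by blast
qed

lemma symmetric_matrix_min_eigenvector:
  fixes S :: "real^'n^'n"
  assumes sym: "transpose S = S"
  obtains u c where "u \<noteq> 0" "S *v u = c *\<^sub>R u" "\<And>v. c * (v \<bullet> v) \<le> v \<bullet> (S *v v)"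
proof -
  have neg: "(- S) *v v = - (S *v v)" for v
    by (simp add: vec_eq_iff matrix_vector_mult_def sum_negf)
  have "transpose (- S) = - S" using sym by (simp add: transpose_def vec_eq_iff)
  then obtain u c where u: "u \<noteq> 0" and eig: "(- S) *v u = c *\<^sub>R u"
    and max: "\<And>v. v \<bullet> ((- S) *v v) \<le> c * (v \<bullet> v)"
    using symmetric_matrix_max_eigenvector by blast
  have "S *v u = (- c) *\<^sub>R u" using eig by (simp add: neg minus_equation_iff[of "S *v u"])
  moreover have "(- c) * (v \<bullet> v) \<le> v \<bullet> (S *v v)" for v using max[of v] by (simp add: neg)
  ultimately show ?thesis using that u by blast
qed

lemma symmetric_matrix_eigenvectors_orthogonal:
  fixes S :: "real^'n^'n"
  assumes sym: "transpose S = S"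
    and u: "S *v u = a *\<^sub>R u" and v: "S *v v = b *\<^sub>R v" and "a \<noteq> b"
  shows "orthogonal u v"
proof -
  have "b * (u \<bullet> v) = a * (u \<bullet> v)"
    using symmetric_matrix_inner_swap[OF sym, of u v] u v by (simp add: inner_commute)
  with \<open>a \<noteq> b\<close> show ?thesis by (simp add: orthogonal_def)
qed

lemma symmetric_matrix_finite_eigenvalues:
  fixes S :: "real^'n^'n"
  assumes sym: "transpose S = S"
  shows "finite (real_eigenvalues S)"
proof -
  define E where "E = real_eigenvalues S"
  define e where "e c = (SOME v. v \<noteq> 0 \<and> S *v v = c *\<^sub>R v)" for c
  have e: "e c \<noteq> 0 \<and> S *v e c = c *\<^sub>R e c" if "c \<in> E" for c
  proof -
    have "\<exists>v. v \<noteq> 0 \<and> S *v v = c *\<^sub>R v" using that unfolding E_def real_eigenvalues_def by simp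
    then show ?thesis unfolding e_def by (rule someI_ex)
  qed
  have inj: "inj_on e E"
  proof (rule inj_onI)
    fix a b assume "a \<in> E" "b \<in> E" "e a = e b"
    then have "a *\<^sub>R e a = b *\<^sub>R e a" using e by metis
    then show "a = b" using e \<open>a \<in> E\<close> by simp
  qed
  have "pairwise orthogonal (e ` E)"
  proof (clarsimp simp: pairwise_def)
    fix a b assume "a \<in> E" "b \<in> E" "e a \<noteq> e b"
    then show "orthogonal (e a) (e b)"
      using e by (intro symmetric_matrix_eigenvectors_orthogonal[OF sym]) auto
  qed
  moreover have "0 \<notin> e ` E" using e by auto
  ultimately have "independent (e ` E)" by (rule pairwise_orthogonal_independent)
  then have "finite (e ` E)" by (rule finiteI_independent)
  then show ?thesis using inj unfolding E_def by (rule finite_imageD)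
qed

lemma symmetric_transpose_mult_self:
  fixes A :: "real^'n^'m"
  shows "transpose (transpose A ** A) = transpose A ** A"
  by (simp add: matrix_transpose_mul)

lemma inner_transpose_mult_self:
  fixes A :: "real^'n^'m"
  shows "v \<bullet> ((transpose A ** A) *v v) = (norm (A *v v))^2"
  by (metis dot_lmul_matrix matrix_vector_mul_assoc power2_norm_eq_inner transpose_matrix_vector
      transpose_transpose)

lemma eigenvalue_transpose_mult_self_nonneg:
  fixes A :: "real^'n^'n"
  assumes "c \<in> real_eigenvalues (transpose A ** A)"
  shows "0 \<le> c"
proof -
  obtain v where "v \<noteq> 0" "(transpose A ** A) *v v = c *\<^sub>R v"
    using assms unfolding real_eigenvalues_def by auto
  then have "c * (v \<bullet> v) = (norm (A *v v))^2" and "0 < v \<bullet> v"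
    using inner_transpose_mult_self[of v A] by auto
  then show ?thesis by (metis zero_le_power2 zero_le_mult_iff linorder_not_le)
qed

lemma finite_singular_values: "finite (singular_values A)"
  unfolding singular_values_def
  by (intro finite_imageI symmetric_matrix_finite_eigenvalues symmetric_transpose_mult_self)

lemma sqrt_eigenvalue_in_singular_values:
  "(transpose A ** A) *v u = c *\<^sub>R u \<Longrightarrow> u \<noteq> 0 \<Longrightarrow> sqrt c \<in> singular_values A"
  unfolding singular_values_def real_eigenvalues_def by auto

lemma sigma_min_nonneg: "0 \<le> sigma_min A"
proof -
  obtain u c where "u \<noteq> 0" "(transpose A ** A) *v u = c *\<^sub>R u"
    using symmetric_matrix_max_eigenvector[OF symmetric_transpose_mult_self] by metis
  then have "singular_values A \<noteq> {}" using sqrt_eigenvalue_in_singular_values by blast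
  moreover have "0 \<le> s" if "s \<in> singular_values A" for s
    using that eigenvalue_transpose_mult_self_nonneg unfolding singular_values_def by auto
  ultimately show ?thesis unfolding sigma_min_def using finite_singular_values Min_in by metis
qed

lemma norm_matrix_vector_le_sigma_max: "norm (A *v v) \<le> sigma_max A * norm v"
proof -
  obtain u c where "u \<noteq> 0" "(transpose A ** A) *v u = c *\<^sub>R u"
    and max: "\<And>v. v \<bullet> ((transpose A ** A) *v v) \<le> c * (v \<bullet> v)"
    using symmetric_matrix_max_eigenvector[OF symmetric_transpose_mult_self] by metis
  then have "sqrt c \<le> sigma_max A"
    unfolding sigma_max_def by (intro Max_ge finite_singular_values sqrt_eigenvalue_in_singular_values)
  moreover have "(norm (A *v v))^2 \<le> c * (norm v)^2"
    using max[of v] by (simp add: inner_transpose_mult_self power2_norm_eq_inner)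
  then have "norm (A *v v) \<le> sqrt (c * (norm v)^2)" by (simp add: real_le_rsqrt)
  then have "norm (A *v v) \<le> sqrt c * norm v" by (simp add: real_sqrt_mult)
  ultimately show ?thesis by (meson mult_right_mono norm_ge_zero order_trans)
qed

lemma sigma_min_le_norm_matrix_vector: "sigma_min A * norm v \<le> norm (A *v v)"
proof -
  obtain u c where "u \<noteq> 0" "(transpose A ** A) *v u = c *\<^sub>R u"
    and min: "\<And>v. c * (v \<bullet> v) \<le> v \<bullet> ((transpose A ** A) *v v)"
    using symmetric_matrix_min_eigenvector[OF symmetric_transpose_mult_self] by metis
  then have "sigma_min A \<le> sqrt c"
    unfolding sigma_min_def by (intro Min_le finite_singular_values sqrt_eigenvalue_in_singular_values)
  moreover have "c * (norm v)^2 \<le> (norm (A *v v))^2"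
    using min[of v] by (simp add: inner_transpose_mult_self power2_norm_eq_inner)
  then have "sqrt (c * (norm v)^2) \<le> norm (A *v v)" by (simp add: real_le_lsqrt)
  then have "sqrt c * norm v \<le> norm (A *v v)" by (simp add: real_sqrt_mult)
  ultimately show ?thesis by (meson mult_right_mono norm_ge_zero order_trans)
qed

lemma matrix_inv_works:
  fixes A :: "'a::semiring_1^'n^'n"
  assumes "invertible A"
  shows "A ** matrix_inv A = mat 1" and "matrix_inv A ** A = mat 1"
  using someI_ex[OF assms[unfolded invertible_def]] unfolding matrix_inv_def by auto

lemma hadamard_diff_right: "W \<odot> (A - B) = W \<odot> A - W \<odot> B"
  unfolding hadamard_def by (simp add: vec_eq_iff algebra_simps)

lemma masked_reconstruction_error:
  assumes "invertible (W \<odot> Mh)"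
  shows "x - matrix_inv (W \<odot> Mh) *v ((W \<odot> M) *v x) = matrix_inv (W \<odot> Mh) *v ((W \<odot> (Mh - M)) *v x)"
  using matrix_inv_works[OF assms]
  by (simp add: hadamard_diff_right matrix_vector_mult_diff_rdistrib matrix_vector_mult_diff_distrib
      matrix_vector_mul_assoc)

lemma masked_reconstruction_error_lower_bound:
  assumes "invertible (W \<odot> Mh)"
  shows "sigma_min (W \<odot> (Mh - M)) / sigma_max (W \<odot> Mh) * norm x
         \<le> norm (x - matrix_inv (W \<odot> Mh) *v ((W \<odot> M) *v x))"
proof -
  let ?A = "W \<odot> Mh" and ?B = "W \<odot> (Mh - M)"
  define err where "err = x - matrix_inv ?A *v ((W \<odot> M) *v x)"
  have "?A *v err = ?B *v x"
    unfolding err_def masked_reconstruction_error[OF assms]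
    by (metis matrix_vector_mul_assoc matrix_inv_works(1)[OF assms] matrix_vector_mul_lid)
  then have bound: "sigma_min ?B * norm x \<le> sigma_max ?A * norm err"
    by (metis sigma_min_le_norm_matrix_vector norm_matrix_vector_le_sigma_max order_trans)
  show ?thesis
  proof (cases "0 < sigma_max ?A")
    case True
    with bound show ?thesis by (simp add: err_def pos_divide_le_eq mult.commute)
  next
    case False
    then have "sigma_min ?B / sigma_max ?A \<le> 0"
      by (simp add: divide_nonneg_nonpos sigma_min_nonneg)
    then show ?thesis by (meson mult_nonpos_nonneg norm_ge_zero order_trans)
  qed
qed

lemma pmf_expectation_ge_weighted_sum:
  fixes P :: "'a pmf" and f g :: "'a \<Rightarrow> real"
  assumes "\<And>m. m \<in> set_pmf P \<Longrightarrow> g m \<le> f m" and "\<And>m. 0 \<le> f m"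
  shows "(\<Sum>m\<in>set_pmf P. pmf P m * g m) \<le> measure_pmf.expectation P f"
proof (cases "finite (set_pmf P)")
  case True
  have "(\<Sum>m\<in>set_pmf P. pmf P m * g m) \<le> (\<Sum>m\<in>set_pmf P. f m * pmf P m)"
    by (intro sum_mono) (metis assms(1) mult.commute mult_left_mono pmf_nonneg)
  also have "\<dots> = measure_pmf.expectation P f"
    using True by (intro integral_measure_pmf_real[symmetric]) auto
  finally show ?thesis .
next
  case False
  then show ?thesis using assms(2) by (simp add: integral_nonneg_AE)
qed


theorem theorem1:
  fixes W M :: "real^'n^'n" and x y :: "real^'n" and P :: "(real^'n^'n) pmf"
  assumes "binary_mask M"
    and "y = (W \<odot> M) *v x"
    and "\<forall>Mh\<in>set_pmf P. binary_mask Mh"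
    and "\<forall>Mh\<in>set_pmf P. invertible (W \<odot> Mh)"
  shows "measure_pmf.expectation P (\<lambda>Mh. norm (x - matrix_inv (W \<odot> Mh) *v y))
         \<ge> (\<Sum>Mh\<in>set_pmf P. pmf P Mh *
               (sigma_min (W \<odot> (Mh - M)) / sigma_max (W \<odot> Mh)) * norm x)"
proof (unfold mult.assoc, rule pmf_expectation_ge_weighted_sum)
  fix Mh assume "Mh \<in> set_pmf P"
  then have "invertible (W \<odot> Mh)" using assms(4) by blast
  then show "sigma_min (W \<odot> (Mh - M)) / sigma_max (W \<odot> Mh) * norm x
             \<le> norm (x - matrix_inv (W \<odot> Mh) *v y)"
    unfolding assms(2) by (rule masked_reconstruction_error_lower_bound)
qed simp

end
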